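(* Let $P$ be a proper Poisson prime ideal of $A$. Then for each $i=1,\dots,n-2$, either $s_i\notin P$ or $t_i\notin P$.
   Context: Let $n\ge 3$, $A=\mathbb{C}[x_1,\dots,x_n]$. Fix $s_1,t_1,\dots,s_{n-2},t_{n-2}\in A$ with each $t_i\ne 0$ and $s_i,t_i$ coprime, such that $s_1/t_1,\dots,s_{n-2}/t_{n-2}$ are algebraically independent over $\mathbb{C}$. $A$ carries the Poisson bracket $\{f,g\}=(t_1\cdots t_{n-2})^2\,\mathrm{Jac}(f,g,s_1/t_1,\dots,s_{n-2}/t_{n-2})$, where $\mathrm{Jac}$ denotes the Jacobian determinant (rows = gradients with respect to $x_1,\dots,x_n$). A Poisson prime ideal is a prime ideal $P$ with $\{P,A\}\subseteq P$; it is residually null if $\{a,b\}\in P$ for all $a,b\in A$, and proper if it is not residually null. *)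

theory Defs
  imports "HOL-Library.Poly_Mapping" "HOL-Computational_Algebra.Fraction_Field"
    "Jordan_Normal_Form.Determinant"
begin

text \<open>Polynomials in countably many variables x_0, x_1, ... over the complex numbers:
  monomials are finitely supported exponent vectors.\<close>
type_synonym mpoly = "(nat \<Rightarrow>\<^sub>0 nat) \<Rightarrow>\<^sub>0 complex"

text \<open>The ring A = C[x_0,...,x_{n-1}] as the set of polynomials in the first n variables.\<close>
definition polys :: "nat \<Rightarrow> mpoly set" where
  "polys n = {p. \<forall>m\<in>Poly_Mapping.keys p. Poly_Mapping.keys m \<subseteq> {..<n}}"

definition const_poly :: "complex \<Rightarrow> mpoly" where
  "const_poly c = Poly_Mapping.single 0 c"

definition pd :: "nat \<Rightarrow> mpoly \<Rightarrow> mpoly" where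
  "pd j p = (\<Sum>m\<in>Poly_Mapping.keys p. Poly_Mapping.single (m - Poly_Mapping.single j 1)
                              (of_nat (Poly_Mapping.lookup m j) * Poly_Mapping.lookup p m))"

definition dvd_in :: "nat \<Rightarrow> mpoly \<Rightarrow> mpoly \<Rightarrow> bool" where
  "dvd_in n d a \<longleftrightarrow> (\<exists>c\<in>polys n. a = d * c)"

definition coprime_in :: "nat \<Rightarrow> mpoly \<Rightarrow> mpoly \<Rightarrow> bool" where
  "coprime_in n a b \<longleftrightarrow>
     (\<forall>d\<in>polys n. dvd_in n d a \<and> dvd_in n d b \<longrightarrow> dvd_in n d 1)"

definition eval_fract :: "mpoly \<Rightarrow> (nat \<Rightarrow> mpoly fract) \<Rightarrow> mpoly fract" where
  "eval_fract F v = (\<Sum>m\<in>Poly_Mapping.keys F. Fract (const_poly (Poly_Mapping.lookup F m)) 1 *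
                        (\<Prod>i\<in>Poly_Mapping.keys m. v i ^ Poly_Mapping.lookup m i))"

definition alg_indep :: "nat \<Rightarrow> (nat \<Rightarrow> mpoly) \<Rightarrow> (nat \<Rightarrow> mpoly) \<Rightarrow> bool" where
  "alg_indep k s t \<longleftrightarrow>
     (\<forall>F\<in>polys k. F \<noteq> 0 \<longrightarrow> eval_fract F (\<lambda>i. Fract (s i) (t i)) \<noteq> 0)"

text \<open>The Poisson bracket {f,g} = (t_0...t_{n-3})^2 Jac(f,g,s_0/t_0,...,s_{n-3}/t_{n-3}).
  Since the gradient of s/t is (t grad s - s grad t)/t^2, multiplying the row of
  s_k/t_k by t_k^2 gives exactly the following polynomial determinant.\<close>
definition pbracket :: "nat \<Rightarrow> (nat \<Rightarrow> mpoly) \<Rightarrow> (nat \<Rightarrow> mpoly) \<Rightarrow> mpoly \<Rightarrow> mpoly \<Rightarrow> mpoly" where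
  "pbracket n s t f g = det (mat n n (\<lambda>(i, j).
      if i = 0 then pd j f
      else if i = 1 then pd j g
      else t (i - 2) * pd j (s (i - 2)) - s (i - 2) * pd j (t (i - 2))))"

definition ideal_in :: "nat \<Rightarrow> mpoly set \<Rightarrow> bool" where
  "ideal_in n I \<longleftrightarrow> I \<subseteq> polys n \<and> 0 \<in> I \<and> (\<forall>a\<in>I. \<forall>b\<in>I. a + b \<in> I) \<and>
      (\<forall>a\<in>polys n. \<forall>b\<in>I. a * b \<in> I)"

definition prime_ideal_in :: "nat \<Rightarrow> mpoly set \<Rightarrow> bool" where
  "prime_ideal_in n P \<longleftrightarrow> ideal_in n P \<and> P \<noteq> polys n \<and>
      (\<forall>a\<in>polys n. \<forall>b\<in>polys n. a * b \<in> P \<longrightarrow> a \<in> P \<or> b \<in> P)"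

definition poisson_prime :: "nat \<Rightarrow> (nat \<Rightarrow> mpoly) \<Rightarrow> (nat \<Rightarrow> mpoly) \<Rightarrow> mpoly set \<Rightarrow> bool" where
  "poisson_prime n s t P \<longleftrightarrow> prime_ideal_in n P \<and>
      (\<forall>p\<in>P. \<forall>a\<in>polys n. pbracket n s t p a \<in> P)"

definition residually_null :: "nat \<Rightarrow> (nat \<Rightarrow> mpoly) \<Rightarrow> (nat \<Rightarrow> mpoly) \<Rightarrow> mpoly set \<Rightarrow> bool" where
  "residually_null n s t P \<longleftrightarrow> (\<forall>a\<in>polys n. \<forall>b\<in>polys n. pbracket n s t a b \<in> P)"

end

theory Submission
  imports Defs
begin

text \<open>If s_i and t_i both lie in P, then the row of the bracket determinant coming from
  s_i/t_i, namely t_i grad s_i - s_i grad t_i, lies entirely in P. Expanding the determinant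
  along permutations, every term contains a factor from that row, so every bracket lies in P
  and P would be residually null.\<close>

lemma polys_add: "p \<in> polys n \<Longrightarrow> q \<in> polys n \<Longrightarrow> p + q \<in> polys n"
  unfolding polys_def using keys_add[of p q] by blast

lemma polys_uminus: "p \<in> polys n \<Longrightarrow> - p \<in> polys n"
  unfolding polys_def by simp

lemma polys_diff: "p \<in> polys n \<Longrightarrow> q \<in> polys n \<Longrightarrow> p - q \<in> polys n"
  using polys_add[OF _ polys_uminus, of p n q] by simp

lemma polys_zero: "0 \<in> polys n"
  unfolding polys_def by simp

lemma polys_one: "1 \<in> polys n"
  unfolding polys_def by simp

lemma polys_mult:
  assumes p: "p \<in> polys n" and q: "q \<in> polys n"
  shows "p * q \<in> polys n"
  unfolding polys_def
proof (rule CollectI, rule ballI)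
  fix m assume "m \<in> Poly_Mapping.keys (p * q)"
  then obtain a b where "m = a + b" "a \<in> Poly_Mapping.keys p" "b \<in> Poly_Mapping.keys q"
    using keys_mult[of p q] by auto
  with p q keys_add[of a b] show "Poly_Mapping.keys m \<subseteq> {..<n}"
    unfolding polys_def by blast
qed

lemma polys_sum: "finite A \<Longrightarrow> (\<And>x. x \<in> A \<Longrightarrow> f x \<in> polys n) \<Longrightarrow> sum f A \<in> polys n"
  by (induction A rule: finite_induct) (auto intro: polys_add polys_zero)

lemma polys_prod: "finite A \<Longrightarrow> (\<And>x. x \<in> A \<Longrightarrow> f x \<in> polys n) \<Longrightarrow> prod f A \<in> polys n"
  by (induction A rule: finite_induct) (auto intro: polys_mult polys_one)

lemma keys_diff_single_subset:
  "Poly_Mapping.keys (m - Poly_Mapping.single j (1::nat)) \<subseteq> Poly_Mapping.keys m"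
  by (auto simp: in_keys_iff lookup_minus)

lemma polys_pd:
  assumes p: "p \<in> polys n"
  shows "pd j p \<in> polys n"
  unfolding pd_def
proof (rule polys_sum)
  fix m assume "m \<in> Poly_Mapping.keys p"
  with p keys_diff_single_subset[of m j]
  have "Poly_Mapping.keys (m - Poly_Mapping.single j 1) \<subseteq> {..<n}"
    unfolding polys_def by blast
  then show "Poly_Mapping.single (m - Poly_Mapping.single j 1)
      (of_nat (Poly_Mapping.lookup m j) * Poly_Mapping.lookup p m) \<in> polys n"
    unfolding polys_def by simp
qed simp

lemma ideal_in_sum:
  assumes I: "ideal_in n P"
  shows "finite A \<Longrightarrow> (\<And>x. x \<in> A \<Longrightarrow> f x \<in> P) \<Longrightarrow> sum f A \<in> P"
proof (induction A rule: finite_induct)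
  case empty then show ?case using I unfolding ideal_in_def by simp
next
  case (insert x A) then show ?case using I unfolding ideal_in_def by simp
qed

lemma ideal_in_prod:
  assumes I: "ideal_in n P" and A: "finite A" "r \<in> A" "f r \<in> P"
    and f: "\<And>x. x \<in> A \<Longrightarrow> f x \<in> polys n"
  shows "prod f A \<in> P"
proof -
  have "prod f (A - {r}) \<in> polys n" using A f by (intro polys_prod) auto
  then have "prod f (A - {r}) * f r \<in> P" using I \<open>f r \<in> P\<close> unfolding ideal_in_def by blast
  then show ?thesis using A by (simp add: prod.remove mult.commute)
qed

lemma det_in_ideal_if_row_in_ideal:
  assumes I: "ideal_in n P" and M: "M \<in> carrier_mat k k"
    and entries: "\<And>i j. i < k \<Longrightarrow> j < k \<Longrightarrow> M $$ (i, j) \<in> polys n"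
    and r: "r < k" and row: "\<And>j. j < k \<Longrightarrow> M $$ (r, j) \<in> P"
  shows "det M \<in> P"
proof -
  have "signof p * (\<Prod>i=0..<k. M $$ (i, p i)) \<in> P" if p: "p permutes {0..<k}" for p
  proof -
    have img: "i < k \<Longrightarrow> p i < k" for i using permutes_in_image[OF p] by auto
    have "(\<Prod>i=0..<k. M $$ (i, p i)) \<in> P"
      using r img by (intro ideal_in_prod[OF I, of _ r]) (auto intro: row entries)
    moreover have "(signof p :: mpoly) \<in> polys n"
      unfolding sign_def by (simp add: polys_one polys_uminus)
    ultimately show ?thesis using I unfolding ideal_in_def by blast
  qed
  then show ?thesis
    using M unfolding det_def by (auto intro!: ideal_in_sum[OF I] simp: finite_permutations)
qed

lemma pbracket_in_ideal:
  assumes I: "ideal_in n P" and i: "i < n - 2"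
    and st: "\<forall>i<n-2. s i \<in> polys n \<and> t i \<in> polys n"
    and sP: "s i \<in> P" and tP: "t i \<in> P"
    and a: "a \<in> polys n" and b: "b \<in> polys n"
  shows "pbracket n s t a b \<in> P"
proof -
  define M where "M = mat n n (\<lambda>(i, j).
      if i = 0 then pd j a
      else if i = 1 then pd j b
      else t (i - 2) * pd j (s (i - 2)) - s (i - 2) * pd j (t (i - 2)))"
  have "M $$ (k, j) \<in> polys n" if "k < n" "j < n" for k j
  proof (cases "k < 2")
    case False
    then have "s (k - 2) \<in> polys n" "t (k - 2) \<in> polys n" using st \<open>k < n\<close> by auto
    then show ?thesis using that False by (simp add: M_def polys_diff polys_mult polys_pd)
  qed (use that a b in \<open>auto simp: M_def polys_pd\<close>)
  moreover have "M $$ (i + 2, j) \<in> P" if "j < n" for j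
  proof -
    have "M $$ (i + 2, j) = pd j (s i) * t i + (- pd j (t i)) * s i"
      using that i unfolding M_def by (simp add: algebra_simps)
    moreover have "pd j (s i) * t i \<in> P" "(- pd j (t i)) * s i \<in> P"
      using I st i sP tP polys_pd polys_uminus[OF polys_pd] unfolding ideal_in_def
      by (blast, blast)
    ultimately show ?thesis using I unfolding ideal_in_def by auto
  qed
  ultimately have "det M \<in> P"
    using i by (intro det_in_ideal_if_row_in_ideal[OF I, of M n "i + 2"]) (auto simp: M_def)
  then show ?thesis unfolding pbracket_def M_def .
qed

theorem lemma2p12:
  fixes n :: nat and s t :: "nat \<Rightarrow> mpoly" and P :: "mpoly set"
  assumes "n \<ge> 3"
    and "\<forall>i<n-2. s i \<in> polys n \<and> t i \<in> polys n \<and> t i \<noteq> 0 \<and> coprime_in n (s i) (t i)"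
    and "alg_indep (n - 2) s t"
    and "poisson_prime n s t P"
    and "\<not> residually_null n s t P"
  shows "\<forall>i<n-2. s i \<notin> P \<or> t i \<notin> P"
proof (intro allI impI)
  fix i assume i: "i < n - 2"
  have I: "ideal_in n P" using assms(4) unfolding poisson_prime_def prime_ideal_in_def by simp
  show "s i \<notin> P \<or> t i \<notin> P"
  proof (rule ccontr)
    assume "\<not> (s i \<notin> P \<or> t i \<notin> P)"
    then have "residually_null n s t P"
      using pbracket_in_ideal[OF I i] assms(2) unfolding residually_null_def by blast
    with assms(5) show False ..
  qed
qed

end
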